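(* Consider a $K$-armed bandit ($K\ge 2$) with reward vector $r\in[0,1]^K$ having distinct entries, optimal value $V^*=\max_a r(a)$, and let $\pi_t$ be generated by the discrete EG iteration $\pi_{t+1}(a)=\pi_t(a)e^{\eta f_t(a)}/Z_t$ with a sufficiently small constant learning rate $\eta>0$ (as required for this iteration to converge to the optimal one-hot policy). Then the sub-optimality $\delta_t:=V^*-V_t$, where $V_t:=\pi_t^\top r$, satisfies $\delta_t=O(1/t)$.
   Context: Policies are softmax policies $\pi_\theta(a)=e^{\theta(a)}/\sum_{a'}e^{\theta(a')}$. At iteration $t$, $U_t(a):=r(a)-\pi_t^\top r$, $f_t(a):=U_t(a)\mathbf{1}\{U_t(a)>0\}$, $Z_t:=\sum_{a'}\pi_t(a')e^{\eta f_t(a')}$. *)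

theory Defs
  imports "HOL-Analysis.Analysis" "HOL-Library.Landau_Symbols"
begin

definition softmax :: "('a::finite \<Rightarrow> real) \<Rightarrow> 'a \<Rightarrow> real" where
  "softmax \<theta> a = exp (\<theta> a) / (\<Sum>a'\<in>UNIV. exp (\<theta> a'))"

definition val :: "('a::finite \<Rightarrow> real) \<Rightarrow> ('a \<Rightarrow> real) \<Rightarrow> real" where
  "val r \<pi> = (\<Sum>a\<in>UNIV. \<pi> a * r a)"

definition adv :: "('a::finite \<Rightarrow> real) \<Rightarrow> ('a \<Rightarrow> real) \<Rightarrow> 'a \<Rightarrow> real" where
  "adv r \<pi> a = r a - val r \<pi>"

definition advpos :: "('a::finite \<Rightarrow> real) \<Rightarrow> ('a \<Rightarrow> real) \<Rightarrow> 'a \<Rightarrow> real" where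
  "advpos r \<pi> a = (if adv r \<pi> a > 0 then adv r \<pi> a else 0)"

definition normZ :: "('a::finite \<Rightarrow> real) \<Rightarrow> real \<Rightarrow> ('a \<Rightarrow> real) \<Rightarrow> real" where
  "normZ r \<eta> \<pi> = (\<Sum>a'\<in>UNIV. \<pi> a' * exp (\<eta> * advpos r \<pi> a'))"

definition eg_step :: "('a::finite \<Rightarrow> real) \<Rightarrow> real \<Rightarrow> ('a \<Rightarrow> real) \<Rightarrow> 'a \<Rightarrow> real" where
  "eg_step r \<eta> \<pi> a = \<pi> a * exp (\<eta> * advpos r \<pi> a) / normZ r \<eta> \<pi>"

definition eg_seq :: "('a::finite \<Rightarrow> real) \<Rightarrow> real \<Rightarrow> ('a \<Rightarrow> real) \<Rightarrow> nat \<Rightarrow> 'a \<Rightarrow> real" where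
  "eg_seq r \<eta> \<pi>0 t = (eg_step r \<eta> ^^ t) \<pi>0"

end

theory Submission
  imports Defs
begin

(* Let s be the optimal arm and D > 0 the gap to the second best reward. Since f_t(s) is the
   suboptimality delta_t and f_t(a) - f_t(s) <= -min(delta_t, D) for a ~= s, the odds
   S_t = (1 - pi_t(s)) / pi_t(s) against s satisfy S_(t+1) <= S_t exp(-eta min(delta_t, D)).
   They therefore never increase, and delta_t >= D (1 - pi_t(s)) = D S_t / (1 + S_t) turns this
   into S_(t+1) <= S_t / (1 + k S_t) with k = eta D / (1 + S_0), i.e. 1/S_t grows at least
   linearly. Finally delta_t <= 1 - pi_t(s) <= S_t <= 1 / (k t). Every eta > 0 works. *)

definition positive_distribution :: "('a::finite \<Rightarrow> real) \<Rightarrow> bool" where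
  "positive_distribution \<pi> \<longleftrightarrow> (\<forall>a. 0 < \<pi> a) \<and> sum \<pi> UNIV = 1"

definition odds_against :: "'a \<Rightarrow> ('a::finite \<Rightarrow> real) \<Rightarrow> real" where
  "odds_against s \<pi> = (\<Sum>a\<in>-{s}. \<pi> a) / \<pi> s"

lemma positive_distribution_softmax: "positive_distribution (softmax \<theta>)"
proof -
  have "0 < (\<Sum>a\<in>UNIV. exp (\<theta> a))" by (intro sum_pos) auto
  then show ?thesis
    unfolding positive_distribution_def softmax_def by (simp add: sum_divide_distrib[symmetric])
qed

lemma normZ_pos: "\<forall>a. 0 < \<pi> a \<Longrightarrow> 0 < normZ r \<eta> \<pi>"
  unfolding normZ_def by (intro sum_pos) auto

lemma positive_distribution_eg_step:
  assumes "positive_distribution \<pi>"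
  shows "positive_distribution (eg_step r \<eta> \<pi>)"
proof -
  have pos: "\<forall>a. 0 < \<pi> a" using assms by (simp add: positive_distribution_def)
  have "sum (eg_step r \<eta> \<pi>) UNIV = (\<Sum>a\<in>UNIV. \<pi> a * exp (\<eta> * advpos r \<pi> a)) / normZ r \<eta> \<pi>"
    unfolding eg_step_def by (simp add: sum_divide_distrib)
  also have "\<dots> = 1" using normZ_pos[OF pos, of r \<eta>] by (simp add: normZ_def)
  finally show ?thesis
    using pos normZ_pos[OF pos, of r \<eta>] by (simp add: positive_distribution_def eg_step_def)
qed

lemma eg_seq_0 [simp]: "eg_seq r \<eta> \<pi>0 0 = \<pi>0"
  by (simp add: eg_seq_def)

lemma eg_seq_Suc [simp]: "eg_seq r \<eta> \<pi>0 (Suc t) = eg_step r \<eta> (eg_seq r \<eta> \<pi>0 t)"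
  by (simp add: eg_seq_def)

lemma positive_distribution_eg_seq:
  "positive_distribution \<pi>0 \<Longrightarrow> positive_distribution (eg_seq r \<eta> \<pi>0 t)"
  by (induction t) (simp_all add: positive_distribution_eg_step)

lemma sum_Compl_singleton:
  fixes \<pi> :: "'a::finite \<Rightarrow> real"
  shows "sum \<pi> UNIV = 1 \<Longrightarrow> (\<Sum>a\<in>-{s}. \<pi> a) = 1 - \<pi> s"
  using sum.remove[of UNIV s \<pi>] by (simp add: Compl_eq_Diff_UNIV)

lemma odds_against_eq:
  "positive_distribution \<pi> \<Longrightarrow> odds_against s \<pi> = (1 - \<pi> s) / \<pi> s"
  by (simp add: odds_against_def positive_distribution_def sum_Compl_singleton)

lemma odds_against_nonneg: "positive_distribution \<pi> \<Longrightarrow> 0 \<le> odds_against s \<pi>"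
  unfolding odds_against_def positive_distribution_def
  by (intro divide_nonneg_pos sum_nonneg) (auto simp: less_imp_le)

lemma one_minus_eq_odds_against:
  assumes "positive_distribution \<pi>"
  shows "1 - \<pi> s = odds_against s \<pi> / (1 + odds_against s \<pi>)"
proof -
  have "0 < \<pi> s" using assms by (simp add: positive_distribution_def)
  then show ?thesis using assms by (simp add: odds_against_eq field_simps)
qed

lemma one_minus_le_odds_against:
  assumes "positive_distribution \<pi>"
  shows "1 - \<pi> s \<le> odds_against s \<pi>"
  using assms odds_against_nonneg[OF assms, of s]
  by (simp add: one_minus_eq_odds_against divide_le_eq algebra_simps)

lemma suboptimality_eq_sum:
  assumes "sum \<pi> UNIV = 1"
  shows "r s - val r \<pi> = (\<Sum>a\<in>-{s}. \<pi> a * (r s - r a))"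
proof -
  have "r s - val r \<pi> = (\<Sum>a\<in>UNIV. \<pi> a * (r s - r a))"
    using assms by (simp add: val_def right_diff_distrib sum_subtractf sum_distrib_right[symmetric])
  also have "\<dots> = (\<Sum>a\<in>-{s}. \<pi> a * (r s - r a))"
    by (simp add: Compl_eq_Diff_UNIV sum_diff1)
  finally show ?thesis .
qed

lemma suboptimality_ge_gap:
  assumes "positive_distribution \<pi>" and gap: "\<forall>a. a \<noteq> s \<longrightarrow> r a \<le> r s - D"
  shows "D * (1 - \<pi> s) \<le> r s - val r \<pi>"
proof -
  have "D * (1 - \<pi> s) = (\<Sum>a\<in>-{s}. \<pi> a * D)"
    using assms(1) by (simp add: positive_distribution_def sum_Compl_singleton mult.commute[of D]
        flip: sum_distrib_right)
  also have "\<dots> \<le> (\<Sum>a\<in>-{s}. \<pi> a * (r s - r a))"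
    using assms by (intro sum_mono mult_left_mono) (auto simp: positive_distribution_def less_imp_le)
  finally show ?thesis
    using assms(1) by (simp add: positive_distribution_def suboptimality_eq_sum)
qed

lemma suboptimality_nonneg:
  assumes "positive_distribution \<pi>" and gap: "\<forall>a. a \<noteq> s \<longrightarrow> r a \<le> r s - D" and "0 \<le> D"
  shows "0 \<le> r s - val r \<pi>"
proof -
  have "\<forall>a. a \<noteq> s \<longrightarrow> r a \<le> r s - 0" using gap \<open>0 \<le> D\<close> by force
  from suboptimality_ge_gap[OF assms(1) this] show ?thesis by simp
qed

lemma suboptimality_le_width:
  assumes "positive_distribution \<pi>" and width: "\<forall>a. r s - r a \<le> W"
  shows "r s - val r \<pi> \<le> W * (1 - \<pi> s)"
proof -
  have "(\<Sum>a\<in>-{s}. \<pi> a * (r s - r a)) \<le> (\<Sum>a\<in>-{s}. \<pi> a * W)"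
    using assms by (intro sum_mono mult_left_mono) (auto simp: positive_distribution_def less_imp_le)
  also have "\<dots> = W * (1 - \<pi> s)"
    using assms(1) by (simp add: positive_distribution_def sum_Compl_singleton mult.commute[of W]
        flip: sum_distrib_right)
  finally show ?thesis
    using assms(1) by (simp add: positive_distribution_def suboptimality_eq_sum)
qed

lemma odds_against_eg_step:
  assumes "positive_distribution \<pi>"
  shows "odds_against s (eg_step r \<eta> \<pi>)
    = (\<Sum>a\<in>-{s}. \<pi> a * exp (\<eta> * (advpos r \<pi> a - advpos r \<pi> s))) / \<pi> s"
proof -
  have pos: "\<forall>a. 0 < \<pi> a" using assms by (simp add: positive_distribution_def)
  have "eg_step r \<eta> \<pi> a / eg_step r \<eta> \<pi> s
      = \<pi> a * exp (\<eta> * (advpos r \<pi> a - advpos r \<pi> s)) / \<pi> s" for a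
    using normZ_pos[OF pos, of r \<eta>] pos
    by (simp add: eg_step_def right_diff_distrib exp_diff)
  then show ?thesis
    unfolding odds_against_def by (simp add: sum_divide_distrib)
qed

lemma advpos_diff_le:
  assumes "0 \<le> r s - val r \<pi>" and "0 \<le> D" and "a \<noteq> s" and gap: "\<forall>a. a \<noteq> s \<longrightarrow> r a \<le> r s - D"
  shows "advpos r \<pi> a - advpos r \<pi> s \<le> - min (r s - val r \<pi>) D"
  using assms by (auto simp: advpos_def adv_def)

lemma odds_against_eg_step_le:
  assumes \<pi>: "positive_distribution \<pi>" and gap: "\<forall>a. a \<noteq> s \<longrightarrow> r a \<le> r s - D"
    and "0 \<le> D" and "0 \<le> \<eta>"
  shows "odds_against s (eg_step r \<eta> \<pi>)
    \<le> odds_against s \<pi> * exp (- \<eta> * min (r s - val r \<pi>) D)"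
proof -
  have pos: "0 < \<pi> a" for a using \<pi> by (simp add: positive_distribution_def)
  from suboptimality_nonneg[OF \<pi> gap \<open>0 \<le> D\<close>]
  have "exp (\<eta> * (advpos r \<pi> a - advpos r \<pi> s)) \<le> exp (- \<eta> * min (r s - val r \<pi>) D)"
    if "a \<noteq> s" for a
    using advpos_diff_le[OF _ \<open>0 \<le> D\<close> that gap] mult_left_mono[OF _ \<open>0 \<le> \<eta>\<close>] by fastforce
  then have "(\<Sum>a\<in>-{s}. \<pi> a * exp (\<eta> * (advpos r \<pi> a - advpos r \<pi> s)))
      \<le> (\<Sum>a\<in>-{s}. \<pi> a) * exp (- \<eta> * min (r s - val r \<pi>) D)"
    unfolding sum_distrib_right using pos by (intro sum_mono mult_left_mono) (auto simp: less_imp_le)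
  then show ?thesis
    using pos[of s] unfolding odds_against_eg_step[OF \<pi>]
    by (simp add: odds_against_def divide_right_mono field_simps)
qed

lemma odds_against_eg_seq_decseq:
  assumes "positive_distribution \<pi>0" and gap: "\<forall>a. a \<noteq> s \<longrightarrow> r a \<le> r s - D"
    and "0 \<le> D" and "0 \<le> \<eta>"
  shows "decseq (\<lambda>t. odds_against s (eg_seq r \<eta> \<pi>0 t))"
proof (rule decseq_SucI)
  fix t
  let ?\<pi> = "eg_seq r \<eta> \<pi>0 t"
  have \<pi>: "positive_distribution ?\<pi>" using assms(1) by (rule positive_distribution_eg_seq)
  have "0 \<le> \<eta> * min (r s - val r ?\<pi>) D"
    using suboptimality_nonneg[OF \<pi> gap] \<open>0 \<le> D\<close> \<open>0 \<le> \<eta>\<close> by simp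
  then have "exp (- \<eta> * min (r s - val r ?\<pi>) D) \<le> 1" by simp
  then have "odds_against s ?\<pi> * exp (- \<eta> * min (r s - val r ?\<pi>) D) \<le> odds_against s ?\<pi>"
    using odds_against_nonneg[OF \<pi>, of s] by (simp add: mult_left_le)
  then show "odds_against s (eg_seq r \<eta> \<pi>0 (Suc t)) \<le> odds_against s ?\<pi>"
    using odds_against_eg_step_le[OF \<pi> gap assms(3,4)] by simp
qed

lemma exp_neg_le_inverse_one_plus:
  fixes x :: real
  assumes "0 \<le> x"
  shows "exp (- x) \<le> 1 / (1 + x)"
  using exp_ge_add_one_self[of x] assms by (simp add: exp_minus field_simps)

lemma odds_against_eg_seq_recurrence:
  assumes \<pi>0: "positive_distribution \<pi>0" and gap: "\<forall>a. a \<noteq> s \<longrightarrow> r a \<le> r s - D"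
    and "0 \<le> D" and "0 \<le> \<eta>"
  defines "S \<equiv> \<lambda>t. odds_against s (eg_seq r \<eta> \<pi>0 t)"
    and "k \<equiv> \<eta> * D / (1 + odds_against s \<pi>0)"
  shows "S (Suc t) \<le> S t / (1 + k * S t)"
proof -
  let ?\<pi> = "eg_seq r \<eta> \<pi>0 t"
  define \<delta> where "\<delta> = r s - val r ?\<pi>"
  have \<pi>: "positive_distribution ?\<pi>" using \<pi>0 by (rule positive_distribution_eg_seq)
  have "0 \<le> S t" unfolding S_def by (rule odds_against_nonneg[OF \<pi>])
  have "0 \<le> k" using odds_against_nonneg[OF \<pi>0, of s] assms(3,4) by (simp add: k_def)
  have "S t \<le> S 0"
    using decseqD[OF odds_against_eg_seq_decseq[OF assms(1-4)], of 0 t] by (simp add: S_def)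
  have "D * S t / (1 + S 0) \<le> D * S t / (1 + S t)"
    using \<open>S t \<le> S 0\<close> \<open>0 \<le> S t\<close> \<open>0 \<le> D\<close> by (intro divide_left_mono mult_nonneg_nonneg) auto
  also have "\<dots> \<le> \<delta>"
    using suboptimality_ge_gap[OF \<pi> gap] one_minus_eq_odds_against[OF \<pi>, of s]
    by (simp add: S_def \<delta>_def)
  finally have "D * S t / (1 + S 0) \<le> \<delta>" .
  moreover have "D * S t / (1 + S 0) \<le> D"
    using \<open>S t \<le> S 0\<close> \<open>0 \<le> S t\<close> \<open>0 \<le> D\<close> by (simp add: divide_le_eq mult_left_mono)
  ultimately have "D * S t / (1 + S 0) \<le> min \<delta> D" by simp
  from mult_left_mono[OF this \<open>0 \<le> \<eta>\<close>]
  have "k * S t \<le> \<eta> * min \<delta> D" by (simp add: k_def S_def)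
  have "S (Suc t) \<le> S t * exp (- \<eta> * min \<delta> D)"
    using odds_against_eg_step_le[OF \<pi> gap assms(3,4)] by (simp add: S_def \<delta>_def)
  also have "\<dots> \<le> S t * exp (- (k * S t))"
    using \<open>k * S t \<le> \<eta> * min \<delta> D\<close> \<open>0 \<le> S t\<close> by (intro mult_left_mono) auto
  also have "\<dots> \<le> S t * (1 / (1 + k * S t))"
    using \<open>0 \<le> S t\<close> \<open>0 \<le> k\<close> by (intro mult_left_mono exp_neg_le_inverse_one_plus) auto
  finally show ?thesis by simp
qed

lemma recurrence_inverse_linear_decay:
  fixes S :: "nat \<Rightarrow> real"
  assumes "\<And>t. 0 \<le> S t" and "0 \<le> k" and "\<And>t. S (Suc t) \<le> S t / (1 + k * S t)"
  shows "k * real t * S t \<le> 1"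
proof (induction t)
  case 0
  show ?case by simp
next
  case (Suc t)
  have pos: "0 < 1 + k * S t" using assms(1,2) by (simp add: add_pos_nonneg)
  have "k * real (Suc t) * S (Suc t) \<le> k * real (Suc t) * (S t / (1 + k * S t))"
    using assms by (intro mult_left_mono) auto
  also have "\<dots> \<le> 1"
    using Suc.IH pos by (simp add: divide_le_eq algebra_simps)
  finally show ?case .
qed

theorem eg_suboptimality_bigo:
  assumes \<pi>0: "positive_distribution \<pi>0" and gap: "\<forall>a. a \<noteq> s \<longrightarrow> r a \<le> r s - D"
    and width: "\<forall>a. r s - r a \<le> W" and "0 < D" and "0 < \<eta>"
  shows "(\<lambda>t. r s - val r (eg_seq r \<eta> \<pi>0 t)) \<in> O(\<lambda>t. 1 / real t)"
proof -
  define S where "S t = odds_against s (eg_seq r \<eta> \<pi>0 t)" for t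
  define k where "k = \<eta> * D / (1 + odds_against s \<pi>0)"
  have \<pi>: "positive_distribution (eg_seq r \<eta> \<pi>0 t)" for t
    using \<pi>0 by (rule positive_distribution_eg_seq)
  have S_nonneg: "0 \<le> S t" for t by (simp add: S_def odds_against_nonneg[OF \<pi>])
  have "0 < k" using odds_against_nonneg[OF \<pi>0, of s] assms(4,5) by (simp add: k_def)
  have decay: "k * real t * S t \<le> 1" for t
    using S_nonneg \<open>0 < k\<close> odds_against_eg_seq_recurrence[OF \<pi>0 gap] assms(4,5)
    by (intro recurrence_inverse_linear_decay) (auto simp: S_def k_def)
  have "0 \<le> W" using width[rule_format, of s] by simp
  have bound: "\<bar>r s - val r (eg_seq r \<eta> \<pi>0 t)\<bar> \<le> W / k * \<bar>1 / real t\<bar>" if "1 \<le> t" for t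
  proof -
    have "0 \<le> r s - val r (eg_seq r \<eta> \<pi>0 t)"
      using suboptimality_nonneg[OF \<pi> gap] \<open>0 < D\<close> by simp
    have "r s - val r (eg_seq r \<eta> \<pi>0 t) \<le> W * (1 - eg_seq r \<eta> \<pi>0 t s)"
      by (rule suboptimality_le_width[OF \<pi> width])
    also have "\<dots> \<le> W * S t"
      using one_minus_le_odds_against[OF \<pi>] \<open>0 \<le> W\<close> by (simp add: S_def mult_left_mono)
    also have "\<dots> \<le> W * (1 / (k * real t))"
      using decay[of t] \<open>0 < k\<close> \<open>0 \<le> W\<close> that
      by (intro mult_left_mono) (simp_all add: le_divide_eq mult.commute)
    finally show ?thesis using \<open>0 \<le> r s - val r (eg_seq r \<eta> \<pi>0 t)\<close> that by simp
  qed
  show ?thesis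
  proof (rule bigoI)
    show "\<forall>\<^sub>F t in at_top. norm (r s - val r (eg_seq r \<eta> \<pi>0 t)) \<le> W / k * norm (1 / real t)"
      using eventually_ge_at_top[of 1] by (rule eventually_mono) (unfold real_norm_def, erule bound)
  qed
qed

lemma inj_max_obtains_gap:
  fixes r :: "'a::finite \<Rightarrow> real"
  assumes "inj r" and "r s = Max (range r)"
  obtains D where "0 < D" and "\<forall>a. a \<noteq> s \<longrightarrow> r a \<le> r s - D"
proof
  let ?D = "Min (insert 1 ((\<lambda>a. r s - r a) ` (-{s})))"
  have "r a < r s" if "a \<noteq> s" for a
  proof -
    have "r a \<le> r s" unfolding assms(2) by (intro Max_ge) auto
    moreover have "r a \<noteq> r s" using \<open>inj r\<close> that by (auto dest: injD)
    ultimately show ?thesis by simp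
  qed
  then show "0 < ?D" by auto
  show "\<forall>a. a \<noteq> s \<longrightarrow> r a \<le> r s - ?D"
  proof (intro allI impI)
    fix a
    assume "a \<noteq> s"
    then have "?D \<le> r s - r a" by (intro Min_le) auto
    then show "r a \<le> r s - ?D" by linarith
  qed
qed

theorem corollary1:
  fixes r :: "'a::finite \<Rightarrow> real" and \<theta>0 :: "'a \<Rightarrow> real"
  assumes "CARD('a) \<ge> 2"
    and "\<forall>a. 0 \<le> r a \<and> r a \<le> 1"
    and "inj r"
  shows "\<exists>\<eta>0>0. \<forall>\<eta>. 0 < \<eta> \<and> \<eta> \<le> \<eta>0 \<longrightarrow>
     (\<lambda>t. Max (range r) - val r (eg_seq r \<eta> (softmax \<theta>0) t)) \<in> O(\<lambda>t. 1 / real t)"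
proof -
  have "Max (range r) \<in> range r" by (rule Max_in) auto
  then obtain s where s: "r s = Max (range r)" by (metis imageE)
  obtain D where "0 < D" and gap: "\<forall>a. a \<noteq> s \<longrightarrow> r a \<le> r s - D"
    using inj_max_obtains_gap[OF \<open>inj r\<close> s] .
  have width: "\<forall>a. r s - r a \<le> 1" using assms(2) by (smt (verit))
  show ?thesis
    using eg_suboptimality_bigo[OF positive_distribution_softmax gap width \<open>0 < D\<close>] s
    by (intro exI[of _ 1]) auto
qed

end
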